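(* Let $\rho$ be a quantum state on a separable Hilbert space with spectrum $\{\lambda^{\rho}_i\}_{i=1}^{+\infty}$ arranged in non-increasing order. If $$\sum_{i=1}^{+\infty}\lambda^{\rho}_i \ln^2 i<+\infty,$$ then $\rho$ has the FA-property.
   Context: A state $\rho$ with spectrum $\{\lambda^{\rho}_i\}_{i=1}^{+\infty}$ (eigenvalues in non-increasing order, counting multiplicity, padded with zeros if the rank is finite) has the FA-property (finite-dimensional approximation property) if there exists a sequence $\{g_i\}_{i=1}^{+\infty}$ of nonnegative numbers such that $\sum_{i=1}^{+\infty}\lambda^{\rho}_i g_i<+\infty$ and $\lim_{\beta\to 0^+}\left[\sum_{i=1}^{+\infty}e^{-\beta g_i}\right]^{\beta}=1$. *)

theory Defs
  imports "HOL-Analysis.Analysis"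
begin

text \<open>Spectrum of a quantum state (density operator on a separable Hilbert space):
  eigenvalues counted with multiplicity, in non-increasing order, padded with zeros,
  nonnegative and summing to 1 (trace one). Index shift: lam k is the paper's
  lambda_(k+1).\<close>
definition state_spectrum :: "(nat \<Rightarrow> real) \<Rightarrow> bool" where
  "state_spectrum lam \<longleftrightarrow> (\<forall>k. 0 \<le> lam k) \<and> antimono lam \<and> lam sums 1"

text \<open>The limit condition requires the
  series of exponentials to be finite for all small beta (otherwise the bracket is
  +infinity), and its beta-th power to tend to 1 as beta tends to 0 from the right.\<close>
definition FA_property :: "(nat \<Rightarrow> real) \<Rightarrow> bool" where
  "FA_property lam \<longleftrightarrow> (\<exists>g :: nat \<Rightarrow> real.
      (\<forall>k. 0 \<le> g k) \<and>
      summable (\<lambda>k. lam k * g k) \<and>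
      (\<forall>\<^sub>F \<beta> in at_right 0. summable (\<lambda>k. exp (- \<beta> * g k))) \<and>
      ((\<lambda>\<beta>. (\<Sum>k. exp (- \<beta> * g k)) powr \<beta>) \<longlongrightarrow> 1) (at_right (0::real)))"

end

theory Submission
  imports Defs
begin

text \<open>Take \<open>g k = (ln (k + 1))\<^sup>2 h k\<close> with a weight \<open>h \<longrightarrow> \<infinity>\<close> growing so slowly that
  \<open>\<Sum> \<lambda>\<^sub>k g k\<close> still converges. Once \<open>h \<ge> c\<close>, completing the square gives
  \<open>exp (-\<beta> g k) \<le> exp (1 / (\<beta> c)) / (k + 1)\<^sup>2\<close>, hence \<open>\<Sum> exp (-\<beta> g k) \<le> K exp (1 / (\<beta> c))\<close>,
  whose \<open>\<beta>\<close>-th power tends to \<open>exp (1 / c)\<close>. Since \<open>c\<close> is arbitrary and \<open>g 0 = 0\<close> bounds the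
  series below by 1, the \<open>\<beta>\<close>-th power of the series tends to 1.\<close>

lemma diff_div_sqrt_le:
  fixes r s :: real
  assumes "0 \<le> s" "s \<le> r" "0 < r"
  shows "(r - s) / sqrt r \<le> 2 * (sqrt r - sqrt s)"
proof -
  have "r - s = (sqrt r - sqrt s) * (sqrt r + sqrt s)"
    using assms by (simp add: algebra_simps)
  also have "\<dots> \<le> (sqrt r - sqrt s) * (2 * sqrt r)"
    using assms by (intro mult_left_mono) (auto simp: real_sqrt_le_mono)
  finally have "r - s \<le> (2 * (sqrt r - sqrt s)) * sqrt r"
    by (simp only: mult_ac)
  then show ?thesis
    using assms by (simp add: pos_divide_le_eq)
qed

text \<open>Dini: no convergent series converges slowest.\<close>
lemma summable_div_sqrt_tail:
  fixes b :: "nat \<Rightarrow> real"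
  assumes pos: "\<And>k. 0 < b k" and "summable b"
  defines "r k \<equiv> \<Sum>j. b (j + k)"
  shows "summable (\<lambda>k. b k / sqrt (r k))"
    and "filterlim (\<lambda>k. 1 / sqrt (r k)) at_top sequentially"
proof -
  have summable_shift: "summable (\<lambda>j. b (j + k))" for k
    using \<open>summable b\<close> by simp
  have r_pos: "0 < r k" for k
    unfolding r_def using suminf_pos[OF summable_shift] pos by simp
  have r_step: "r k = b k + r (Suc k)" for k
    using suminf_split_head[OF summable_shift[of k]] by (simp add: r_def)
  have r_lim: "r \<longlonglongrightarrow> 0"
    unfolding r_def by (rule suminf_exist_split2[OF \<open>summable b\<close>])
  have telescoping: "summable (\<lambda>k. 2 * (sqrt (r k) - sqrt (r (Suc k))))"
    using tendsto_real_sqrt[OF r_lim] by (intro summable_mult telescope_summable') simp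
  have "b k / sqrt (r k) \<le> 2 * (sqrt (r k) - sqrt (r (Suc k)))" for k
    using diff_div_sqrt_le[of "r (Suc k)" "r k"] r_pos[of k] r_pos[of "Suc k"] pos[of k]
    by (simp add: r_step[of k])
  then show "summable (\<lambda>k. b k / sqrt (r k))"
    by (intro summable_comparison_test'[OF telescoping]) (simp add: less_imp_le pos r_pos)
  have "filterlim (\<lambda>k. sqrt (r k)) (at_right 0) sequentially"
    unfolding filterlim_at using tendsto_real_sqrt[OF r_lim] r_pos
    by (auto intro!: always_eventually) (metis less_irrefl)
  then show "filterlim (\<lambda>k. 1 / sqrt (r k)) at_top sequentially"
    using filterlim_compose[OF filterlim_inverse_at_top_right] by (simp add: inverse_eq_divide)
qed

lemma summable_mult_weight_at_top:
  fixes a :: "nat \<Rightarrow> real"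
  assumes nonneg: "\<And>k. 0 \<le> a k" and "summable a"
  obtains h where "\<And>k. 0 \<le> h k" "summable (\<lambda>k. a k * h k)" "filterlim h at_top sequentially"
proof -
  \<comment> \<open>the geometric summand keeps every tail of \<open>b\<close> positive\<close>
  define b where "b k = a k + (1 / 2) ^ k" for k
  have b_pos: "0 < b k" for k
    unfolding b_def using nonneg[of k] by (simp add: add_nonneg_pos)
  have "summable b"
    unfolding b_def by (intro summable_add \<open>summable a\<close> summable_geometric) simp
  define h where "h = (\<lambda>k. 1 / sqrt (\<Sum>j. b (j + k)))"
  have h_nonneg: "0 \<le> h k" for k
    unfolding h_def using suminf_pos[of "\<lambda>j. b (j + k)"] \<open>summable b\<close> b_pos by simp
  have "summable (\<lambda>k. b k * h k)"
    using summable_div_sqrt_tail(1)[OF b_pos \<open>summable b\<close>] by (simp add: h_def)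
  then have "summable (\<lambda>k. a k * h k)"
    by (rule summable_comparison_test')
      (auto simp: b_def nonneg h_nonneg intro!: mult_right_mono)
  moreover have "filterlim h at_top sequentially"
    using summable_div_sqrt_tail(2)[OF b_pos \<open>summable b\<close>] by (simp add: h_def)
  ultimately show ?thesis
    using h_nonneg that by blast
qed

lemma exp_neg_ln_square_le:
  fixes t x :: real
  assumes "0 < t" "0 < x"
  shows "exp (- t * (ln x)\<^sup>2) \<le> exp (1 / t) / x\<^sup>2"
proof -
  have "0 \<le> (t * ln x - 1)\<^sup>2 / t"
    using assms by simp
  also have "\<dots> = t * (ln x)\<^sup>2 - 2 * ln x + 1 / t"
    using assms by (simp add: field_simps power2_eq_square)
  finally have "exp (- t * (ln x)\<^sup>2) \<le> exp (1 / t - ln (x\<^sup>2))"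
    using assms by (simp add: ln_realpow)
  also have "\<dots> = exp (1 / t) / x\<^sup>2"
    using assms by (simp add: exp_diff)
  finally show ?thesis .
qed

lemma summable_exp_bound_log_square:
  fixes g :: "nat \<Rightarrow> real" and c :: real
  assumes "0 < c" and nonneg: "\<And>k. 0 \<le> g k"
    and growth: "\<forall>\<^sub>F k in sequentially. c * (ln (real (k + 1)))\<^sup>2 \<le> g k"
  obtains K where "0 < K"
    "\<And>\<beta>. 0 < \<beta> \<Longrightarrow> summable (\<lambda>k. exp (- \<beta> * g k))"
    "\<And>\<beta>. 0 < \<beta> \<Longrightarrow> (\<Sum>k. exp (- \<beta> * g k)) \<le> K * exp (1 / (\<beta> * c))"
proof -
  obtain N where N: "\<And>k. N \<le> k \<Longrightarrow> c * (ln (real (k + 1)))\<^sup>2 \<le> g k"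
    using growth unfolding eventually_sequentially by blast
  define w where "w = (\<lambda>k. (real N + 1)\<^sup>2 / (real k + 1)\<^sup>2)"
  have "summable (\<lambda>n. 1 / real n ^ 2)"
    using inverse_power_summable[of 2] by (simp add: divide_inverse)
  then have "summable (\<lambda>k. 1 / (real k + 1) ^ 2)"
    using summable_iff_shift[of "\<lambda>n. 1 / real n ^ 2" 1] by (simp add: add.commute)
  from summable_mult[OF this, of "(real N + 1)\<^sup>2"] have summable_w: "summable w"
    by (simp add: w_def)
  have w_pos: "0 < w k" for k
    by (simp add: w_def)
  have term_le: "exp (- \<beta> * g k) \<le> w k * exp (1 / (\<beta> * c))" if "0 < \<beta>" for \<beta> k
  proof (cases "k < N")
    case True
    have "exp (- \<beta> * g k) \<le> 1"
      using that nonneg[of k] by simp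
    also have "1 \<le> w k"
      using True by (simp add: w_def power_mono)
    also have "\<dots> \<le> w k * exp (1 / (\<beta> * c))"
      using that \<open>0 < c\<close> w_pos[of k] by simp
    finally show ?thesis .
  next
    case False
    have "c * (ln (real k + 1))\<^sup>2 \<le> g k"
      using N[of k] False by (simp add: add.commute)
    then have "exp (- \<beta> * g k) \<le> exp (- (\<beta> * c) * (ln (real k + 1))\<^sup>2)"
      using that by (simp add: mult_left_mono)
    also have "\<dots> \<le> exp (1 / (\<beta> * c)) / (real k + 1)\<^sup>2"
      using that \<open>0 < c\<close> by (intro exp_neg_ln_square_le) auto
    also have "\<dots> \<le> w k * exp (1 / (\<beta> * c))"
      by (simp add: w_def divide_right_mono)
    finally show ?thesis .
  qed
  show ?thesis
  proof
    show "0 < suminf w"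
      using suminf_pos[OF summable_w w_pos] .
    fix \<beta> :: real assume "0 < \<beta>"
    have summable_bound: "summable (\<lambda>k. w k * exp (1 / (\<beta> * c)))"
      using summable_w by (rule summable_mult2)
    show summable_exp: "summable (\<lambda>k. exp (- \<beta> * g k))"
      by (rule summable_comparison_test'[OF summable_bound]) (use term_le \<open>0 < \<beta>\<close> in auto)
    have "(\<Sum>k. exp (- \<beta> * g k)) \<le> (\<Sum>k. w k * exp (1 / (\<beta> * c)))"
      by (rule suminf_le[OF _ summable_exp summable_bound]) (use term_le \<open>0 < \<beta>\<close> in auto)
    also have "\<dots> = suminf w * exp (1 / (\<beta> * c))"
      by (rule suminf_mult2[OF summable_w, symmetric])
    finally show "(\<Sum>k. exp (- \<beta> * g k)) \<le> suminf w * exp (1 / (\<beta> * c))" .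
  qed
qed

lemma powr_tendsto_one_at_right_zero:
  fixes S :: "real \<Rightarrow> real"
  assumes lower: "\<forall>\<^sub>F \<beta> in at_right 0. 1 \<le> S \<beta>"
    and upper: "\<And>c. 0 < c \<Longrightarrow> \<exists>K>0. \<forall>\<^sub>F \<beta> in at_right 0. S \<beta> \<le> K * exp (1 / (\<beta> * c))"
  shows "((\<lambda>\<beta>. S \<beta> powr \<beta>) \<longlongrightarrow> 1) (at_right 0)"
proof -
  have pos: "\<forall>\<^sub>F \<beta> in at_right (0::real). 0 < \<beta>"
    by (simp add: eventually_at_right_less)
  show ?thesis
  proof (rule order_tendstoI)
    fix a :: real
    assume "a < 1"
    show "\<forall>\<^sub>F \<beta> in at_right 0. a < S \<beta> powr \<beta>"
      using lower pos
    proof eventually_elim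
      case (elim \<beta>)
      then have "1 \<le> S \<beta> powr \<beta>"
        by (simp add: ge_one_powr_ge_zero)
      then show ?case
        using \<open>a < 1\<close> by linarith
    qed
  next
    fix a :: real
    assume "1 < a"
    define c where "c = 2 / ln a"
    have "0 < c" and exp_c: "exp (1 / c) = sqrt a"
      using \<open>1 < a\<close> by (simp_all add: c_def powr_half_sqrt[symmetric] powr_def)
    then obtain K where "0 < K" and bound: "\<forall>\<^sub>F \<beta> in at_right 0. S \<beta> \<le> K * exp (1 / (\<beta> * c))"
      using upper by blast
    have "((\<lambda>\<beta>. K powr \<beta>) \<longlongrightarrow> K powr 0) (at_right 0)"
      using \<open>0 < K\<close> by (intro tendsto_powr tendsto_const tendsto_ident_at) auto
    then have "\<forall>\<^sub>F \<beta> in at_right 0. K powr \<beta> < sqrt a"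
      using \<open>0 < K\<close> \<open>1 < a\<close> by (intro order_tendstoD(2)) auto
    with lower bound pos show "\<forall>\<^sub>F \<beta> in at_right 0. S \<beta> powr \<beta> < a"
    proof eventually_elim
      case (elim \<beta>)
      have "S \<beta> powr \<beta> \<le> (K * exp (1 / (\<beta> * c))) powr \<beta>"
        using elim by (intro powr_mono2) auto
      also have "\<dots> = K powr \<beta> * sqrt a"
        using elim \<open>0 < K\<close> \<open>0 < c\<close> by (simp add: powr_mult exp_powr_real exp_c[symmetric])
      also have "\<dots> < sqrt a * sqrt a"
        using elim \<open>1 < a\<close> by (intro mult_strict_right_mono) auto
      finally show ?case
        using \<open>1 < a\<close> by simp
    qed
  qed
qed

lemma FA_property_if_log_square_growth:
  fixes lam g :: "nat \<Rightarrow> real"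
  assumes nonneg: "\<And>k. 0 \<le> g k" and "g 0 = 0" and "summable (\<lambda>k. lam k * g k)"
    and growth: "\<And>c. 0 < c \<Longrightarrow> \<forall>\<^sub>F k in sequentially. c * (ln (real (k + 1)))\<^sup>2 \<le> g k"
  shows "FA_property lam"
proof -
  have near_zero: "\<forall>\<^sub>F \<beta> in at_right 0. P \<beta>" if "\<And>\<beta>. 0 < \<beta> \<Longrightarrow> P \<beta>" for P :: "real \<Rightarrow> bool"
    by (rule eventually_mono[OF eventually_at_right_less[of 0]]) (rule that)
  have summable_exp: "summable (\<lambda>k. exp (- \<beta> * g k))" if "0 < \<beta>" for \<beta>
    by (rule summable_exp_bound_log_square[OF zero_less_one nonneg growth[OF zero_less_one]])
      (use that in blast)
  have "1 \<le> (\<Sum>k. exp (- \<beta> * g k))" if "0 < \<beta>" for \<beta>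
    using sum_le_suminf[OF summable_exp[OF that], of "{0}"] by (simp add: \<open>g 0 = 0\<close>)
  then have lower: "\<forall>\<^sub>F \<beta> in at_right 0. 1 \<le> (\<Sum>k. exp (- \<beta> * g k))"
    by (rule near_zero)
  have upper: "\<exists>K>0. \<forall>\<^sub>F \<beta> in at_right 0. (\<Sum>k. exp (- \<beta> * g k)) \<le> K * exp (1 / (\<beta> * c))"
    if c_pos: "0 < c" for c
  proof -
    obtain K where "0 < K"
      and K_bound: "\<And>\<beta>. 0 < \<beta> \<Longrightarrow> (\<Sum>k. exp (- \<beta> * g k)) \<le> K * exp (1 / (\<beta> * c))"
      by (rule summable_exp_bound_log_square[OF c_pos nonneg growth[OF c_pos]]) (rule that)
    moreover have "\<forall>\<^sub>F \<beta> in at_right 0. (\<Sum>k. exp (- \<beta> * g k)) \<le> K * exp (1 / (\<beta> * c))"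
      using K_bound by (rule near_zero)
    ultimately show ?thesis
      by blast
  qed
  have "\<forall>\<^sub>F \<beta> in at_right 0. summable (\<lambda>k. exp (- \<beta> * g k))"
    using summable_exp by (rule near_zero)
  moreover have "((\<lambda>\<beta>. (\<Sum>k. exp (- \<beta> * g k)) powr \<beta>) \<longlongrightarrow> 1) (at_right 0)"
    using lower upper by (rule powr_tendsto_one_at_right_zero)
  ultimately show ?thesis
    unfolding FA_property_def using nonneg \<open>summable (\<lambda>k. lam k * g k)\<close> by blast
qed

theorem proposition2:
  fixes lam :: "nat \<Rightarrow> real"
  assumes "state_spectrum lam"
    and "summable (\<lambda>k. lam k * (ln (real (k + 1)))\<^sup>2)"
  shows "FA_property lam"
proof -
  define L where "L k = (ln (real (k + 1)))\<^sup>2" for k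
  have "0 \<le> lam k * L k" for k
    using assms(1) by (simp add: state_spectrum_def L_def)
  moreover have "summable (\<lambda>k. lam k * L k)"
    using assms(2) by (simp add: L_def)
  ultimately obtain h where h_nonneg: "\<And>k. 0 \<le> h k"
    and summable_h: "summable (\<lambda>k. lam k * L k * h k)" and h_at_top: "filterlim h at_top sequentially"
    by (rule summable_mult_weight_at_top[where a = "\<lambda>k. lam k * L k"]) blast
  show ?thesis
  proof (rule FA_property_if_log_square_growth[where g = "\<lambda>k. L k * h k"])
    show "0 \<le> L k * h k" for k
      by (simp add: L_def h_nonneg)
    show "L 0 * h 0 = 0"
      by (simp add: L_def)
    show "summable (\<lambda>k. lam k * (L k * h k))"
      using summable_h by (simp add: mult.assoc)
    show "\<forall>\<^sub>F k in sequentially. c * (ln (real (k + 1)))\<^sup>2 \<le> L k * h k" for c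
      using h_at_top[unfolded filterlim_at_top, rule_format, of c]
      by eventually_elim (simp add: L_def mult_right_mono mult.commute[of _ "h _"])
  qed
qed

end
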